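(* Let $(M,g)$ be a Riemannian manifold of dimension $n$ with Riemann curvature tensor $R$, and let $p$ be an integer with $1\leq p\leq n/2$. Then $(M,g)$ is $p$-pure if and only if at each point $m\in M$ there exists a family $\{h_i:i\in I\}$ of symmetric bilinear forms on $T_mM$ which are simultaneously diagonalizable (by an orthonormal basis of $T_mM$) such that $R^p$ at $m$ belongs to $\mathrm{Span}\{h_{i_1}h_{i_2}\cdots h_{i_p}: i_1,\dots,i_p\in I\}$.
   Context: For a Euclidean vector space $(V,g)$, a double form of degree $(p,q)$ is an element of $\Lambda^pV^*\otimes\Lambda^qV^*$, identified with a multilinear form skew-symmetric in its first $p$ and in its last $q$ arguments; bilinear forms on $V$ are $(1,1)$ double forms. The exterior product of double forms is defined on decomposable elements by $(\theta_1\otimes\theta_2)(\theta_3\otimes\theta_4)=(\theta_1\wedge\theta_3)\otimes(\theta_2\wedge\theta_4)$ and extended bilinearly; $h_{i_1}\cdots h_{i_p}$ and $R^p$ denote products for this operation. The curvature tensor $R$ at $m$ is regarded as a $(2,2)$ double form on $T_mM$. $(M,g)$ is $p$-pure if at each point $m$ there is an orthonormal basis $(e_i)$ of $T_mM$, with dual basis $(e_i^* )$, such that $R^p\in\mathrm{Span}\{e_{i_1}^*\wedge\cdots\wedge e_{i_p}^*\otimes e_{i_1}^*\wedge\cdots\wedge e_{i_p}^*:1\leq i_1<\dots<i_p\leq n\}$. *)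

theory Defs
  imports "HOL-Analysis.Analysis"
begin

text \<open>A double form on the Euclidean space real^'n, viewed as a function of two
  lists of vectors (the first p arguments and the last q arguments).  Only its values
  on lists of the correct lengths (p,q) are meaningful.\<close>
type_synonym 'n dform = "(real^'n) list \<Rightarrow> (real^'n) list \<Rightarrow> real"

text \<open>Exterior product of a (p,q) double form with an (r,s) double form
  (determinant convention, agreeing with the rule on decomposable elements).\<close>
definition dprod :: "nat \<Rightarrow> nat \<Rightarrow> nat \<Rightarrow> nat \<Rightarrow> 'n dform \<Rightarrow> 'n dform \<Rightarrow> 'n dform" where
  "dprod p q r s \<omega> \<theta> = (\<lambda>xs ys.
     (\<Sum>\<sigma> | \<sigma> permutes {..<p+r}. \<Sum>\<tau> | \<tau> permutes {..<q+s}.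
        of_int (sign \<sigma> * sign \<tau>)
        * \<omega> (map (\<lambda>i. xs ! \<sigma> i) [0..<p]) (map (\<lambda>j. ys ! \<tau> j) [0..<q])
        * \<theta> (map (\<lambda>i. xs ! \<sigma> i) [p..<p+r]) (map (\<lambda>j. ys ! \<tau> j) [q..<q+s]))
     / (fact p * fact r * fact q * fact s))"

definition dform_of_bilinear :: "(real^'n \<Rightarrow> real^'n \<Rightarrow> real) \<Rightarrow> 'n dform" where
  "dform_of_bilinear h = (\<lambda>xs ys. h (xs ! 0) (ys ! 0))"

definition curv_dform :: "(real^'n \<Rightarrow> real^'n \<Rightarrow> real^'n \<Rightarrow> real^'n \<Rightarrow> real) \<Rightarrow> 'n dform" where
  "curv_dform R = (\<lambda>xs ys. R (xs ! 0) (xs ! 1) (ys ! 0) (ys ! 1))"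

fun dprod_list :: "'n dform list \<Rightarrow> 'n dform" where
  "dprod_list [] = (\<lambda>_ _. 1)"
| "dprod_list (h # hs) = dprod 1 1 (length hs) (length hs) h (dprod_list hs)"

fun dpow :: "nat \<Rightarrow> 'n dform \<Rightarrow> 'n dform" where
  "dpow 0 R = (\<lambda>_ _. 1)"
| "dpow (Suc k) R = dprod 2 2 (2*k) (2*k) R (dpow k R)"

definition wedge :: "(real^'n \<Rightarrow> real) list \<Rightarrow> (real^'n) list \<Rightarrow> real" where
  "wedge \<alpha>s xs = (\<Sum>\<sigma> | \<sigma> permutes {..<length \<alpha>s}.
      of_int (sign \<sigma>) * (\<Prod>k<length \<alpha>s. (\<alpha>s ! k) (xs ! \<sigma> k)))"

definition orthonormal_basis :: "('n \<Rightarrow> real^'n) \<Rightarrow> bool" where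
  "orthonormal_basis e \<longleftrightarrow> (\<forall>i j. e i \<bullet> e j = (if i = j then 1 else 0))"

definition pure_elem :: "('n \<Rightarrow> real^'n) \<Rightarrow> 'n list \<Rightarrow> 'n dform" where
  "pure_elem e is = (\<lambda>xs ys. wedge (map (\<lambda>i v. e i \<bullet> v) is) xs
                           * wedge (map (\<lambda>i v. e i \<bullet> v) is) ys)"

definition in_dspan :: "nat \<Rightarrow> nat \<Rightarrow> 'n dform \<Rightarrow> 'n dform set \<Rightarrow> bool" where
  "in_dspan k l T G \<longleftrightarrow> (\<exists>F c. finite F \<and> F \<subseteq> G \<and>
     (\<forall>xs ys. length xs = k \<longrightarrow> length ys = l \<longrightarrow> T xs ys = (\<Sum>g\<in>F. c g * g xs ys)))"

definition sym_bilinear :: "(real^'n \<Rightarrow> real^'n \<Rightarrow> real) \<Rightarrow> bool" where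
  "sym_bilinear h \<longleftrightarrow> bilinear h \<and> (\<forall>x y. h x y = h y x)"

definition alg_curv :: "(real^'n \<Rightarrow> real^'n \<Rightarrow> real^'n \<Rightarrow> real^'n \<Rightarrow> real) \<Rightarrow> bool" where
  "alg_curv R \<longleftrightarrow>
     (\<forall>y z w. linear (\<lambda>x. R x y z w)) \<and> (\<forall>x z w. linear (\<lambda>y. R x y z w)) \<and>
     (\<forall>x y w. linear (\<lambda>z. R x y z w)) \<and> (\<forall>x y z. linear (\<lambda>w. R x y z w)) \<and>
     (\<forall>x y z w. R x y z w = - R y x z w) \<and> (\<forall>x y z w. R x y z w = - R x y w z) \<and>
     (\<forall>x y z w. R x y z w = R z w x y) \<and>
     (\<forall>x y z w. R x y z w + R y z x w + R z x y w = 0)"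

text \<open>p-purity of a "manifold" given by its set of points M and its curvature tensor at
  each point, expressed in an orthonormal frame (tangent spaces identified with real^'n).\<close>
definition is_p_pure :: "'m set \<Rightarrow> ('m \<Rightarrow> real^'n \<Rightarrow> real^'n \<Rightarrow> real^'n \<Rightarrow> real^'n \<Rightarrow> real) \<Rightarrow> nat \<Rightarrow> bool" where
  "is_p_pure M R p \<longleftrightarrow> (\<forall>m\<in>M. \<exists>e. orthonormal_basis e \<and>
     in_dspan (2*p) (2*p) (dpow p (curv_dform (R m)))
       {pure_elem e is | is. distinct is \<and> length is = 2*p})"

end

theory Submission
  imports Defs
begin

text \<open>With respect to an orthonormal basis $(e_i)$, a symmetric bilinear form diagonal in
  that basis is $h = \sum_i h(e_i,e_i)\, e_i^*\otimes e_i^*$, and a product of squares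
  $(e_{i_1}^*\otimes e_{i_1}^*)\cdots(e_{i_k}^*\otimes e_{i_k}^*)$ of 1-forms is
  $e_{i_1}^*\wedge\dots\wedge e_{i_k}^* \otimes e_{i_1}^*\wedge\dots\wedge e_{i_k}^*$, which vanishes
  unless the indices are distinct. Hence, by multilinearity of the exterior product, the span of
  the products of $k$ forms diagonal in $(e_i)$ is exactly the span of the pure elements of degree
  $k$. The equivalence therefore holds pointwise for any double form, and no property of the
  curvature tensor is needed.\<close>

definition shift_perm :: "(nat \<Rightarrow> nat) \<Rightarrow> nat \<Rightarrow> nat" where
  "shift_perm \<rho> = (\<lambda>i. case i of 0 \<Rightarrow> 0 | Suc j \<Rightarrow> Suc (\<rho> j))"

lemma shift_perm_id: "shift_perm id = id"
  by (auto simp: shift_perm_def fun_eq_iff split: nat.split)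

lemma shift_perm_comp: "shift_perm (p \<circ> q) = shift_perm p \<circ> shift_perm q"
  by (auto simp: shift_perm_def fun_eq_iff split: nat.split)

lemma shift_perm_transpose: "shift_perm (Transposition.transpose a b) = Transposition.transpose (Suc a) (Suc b)"
  by (auto simp: shift_perm_def fun_eq_iff Transposition.transpose_def split: nat.split)

lemma shift_perm_permutes_and_sign:
  assumes "\<rho> permutes {..<k}"
  shows "shift_perm \<rho> permutes {..<Suc k} \<and> sign (shift_perm \<rho>) = sign \<rho>"
  using assms finite_lessThan
proof (induction rule: permutes_induct)
  case id
  then show ?case using shift_perm_id permutes_id[of "{..<Suc k}"] by (simp add: id_def)
next
  case (swap a b p)
  have t: "Transposition.transpose (Suc a) (Suc b) permutes {..<Suc k}"
    using swap by (intro permutes_swap_id) auto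
  have pp: "permutation p" using swap permutes_imp_permutation by blast
  have pp2: "permutation (shift_perm p)" using swap permutes_imp_permutation finite_lessThan by blast
  have e: "shift_perm (Transposition.transpose a b \<circ> p) = Transposition.transpose (Suc a) (Suc b) \<circ> shift_perm p"
    by (simp only: shift_perm_comp shift_perm_transpose)
  have s1: "sign (Transposition.transpose (Suc a) (Suc b) \<circ> shift_perm p) = sign (Transposition.transpose a b \<circ> p)"
    using swap pp pp2 by (simp only: sign_compose permutation_swap_id sign_swap_id) simp
  show ?case unfolding e using swap t s1 permutes_compose by blast
qed

text \<open>The factor $k!$ appears because
  $\sigma \mapsto \sigma \circ \mathit{shift\_perm}\ \rho$ reindexes the permutations of $\{0..k\}$
  for each of the $k!$ permutations $\rho$ of $\{0..k-1\}$.\<close>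

lemma wedge_Cons_expansion:
  assumes len: "length \<alpha>s = k"
  shows "(\<Sum>\<sigma> | \<sigma> permutes {..<Suc k}. of_int (sign \<sigma>) * \<alpha> (xs ! \<sigma> 0)
            * wedge \<alpha>s (map (\<lambda>i. xs ! \<sigma> i) [1..<Suc k])) = fact k * wedge (\<alpha>#\<alpha>s) xs"
proof -
  define F where "F \<pi> = of_int (sign \<pi>) * (\<Prod>i<Suc k. ((\<alpha>#\<alpha>s)!i) (xs ! \<pi> i))" for \<pi>
  have W: "wedge (\<alpha>#\<alpha>s) xs = (\<Sum>\<pi> | \<pi> permutes {..<Suc k}. F \<pi>)"
    unfolding wedge_def F_def using len by simp
  have term_eq: "of_int (sign \<sigma>) * \<alpha> (xs ! \<sigma> 0) * (of_int (sign \<rho>) *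
        (\<Prod>j<k. (\<alpha>s!j) ((map (\<lambda>i. xs ! \<sigma> i) [1..<Suc k]) ! (\<rho> j))))
      = F (\<sigma> \<circ> shift_perm \<rho>)"
    if s: "\<sigma> permutes {..<Suc k}" and r: "\<rho> permutes {..<k}" for \<sigma> \<rho>
  proof -
    have shp: "shift_perm \<rho> permutes {..<Suc k}" and sg: "sign (shift_perm \<rho>) = sign \<rho>"
      using shift_perm_permutes_and_sign[OF r] by auto
    have sgc: "sign (\<sigma> \<circ> shift_perm \<rho>) = sign \<sigma> * sign \<rho>"
      using sign_compose[of \<sigma> "shift_perm \<rho>"] s shp sg permutes_imp_permutation[OF finite_lessThan] by metis
    have rj: "\<rho> j < k" if "j < k" for j using r that permutes_in_image by fastforce
    have pr: "(\<Prod>j<k. (\<alpha>s!j) ((map (\<lambda>i. xs ! \<sigma> i) [1..<Suc k]) ! (\<rho> j)))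
        = (\<Prod>j<k. (\<alpha>s!j) (xs ! \<sigma> (Suc (\<rho> j))))"
      by (rule prod.cong) (auto simp: rj nth_map simp del: upt_Suc)
    have pr2: "(\<Prod>i<Suc k. ((\<alpha>#\<alpha>s)!i) (xs ! (\<sigma> \<circ> shift_perm \<rho>) i))
        = \<alpha> (xs ! \<sigma> 0) * (\<Prod>j<k. (\<alpha>s!j) (xs ! \<sigma> (Suc (\<rho> j))))"
      by (simp only: prod.lessThan_Suc_shift) (simp add: shift_perm_def)
    show ?thesis unfolding F_def pr pr2 sgc by simp
  qed
  have "(\<Sum>\<sigma> | \<sigma> permutes {..<Suc k}. of_int (sign \<sigma>) * \<alpha> (xs ! \<sigma> 0)
            * wedge \<alpha>s (map (\<lambda>i. xs ! \<sigma> i) [1..<Suc k]))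
     = (\<Sum>\<sigma> | \<sigma> permutes {..<Suc k}. \<Sum>\<rho> | \<rho> permutes {..<k}. F (\<sigma> \<circ> shift_perm \<rho>))"
    unfolding wedge_def len sum_distrib_left
    by (intro sum.cong refl) (simp only: term_eq mem_Collect_eq)
  also have "\<dots> = (\<Sum>\<rho> | \<rho> permutes {..<k}. \<Sum>\<sigma> | \<sigma> permutes {..<Suc k}. F (\<sigma> \<circ> shift_perm \<rho>))"
    by (rule sum.swap)
  also have "\<dots> = (\<Sum>\<rho> | \<rho> permutes {..<k}. wedge (\<alpha>#\<alpha>s) xs)"
  proof (rule sum.cong[OF refl])
    fix \<rho> assume "\<rho> \<in> {\<rho>. \<rho> permutes {..<k}}"
    then have "shift_perm \<rho> permutes {..<Suc k}" using shift_perm_permutes_and_sign by blast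
    from sum_permutations_compose_right[OF this, of F]
    show "(\<Sum>\<sigma> | \<sigma> permutes {..<Suc k}. F (\<sigma> \<circ> shift_perm \<rho>)) = wedge (\<alpha>#\<alpha>s) xs" unfolding W by simp
  qed
  also have "\<dots> = fact k * wedge (\<alpha>#\<alpha>s) xs"
    by (simp add: card_permutations)
  finally show ?thesis .
qed

lemma wedge_Nil: "wedge [] xs = 1"
  by (simp add: wedge_def)

definition square_dform :: "(real^'n \<Rightarrow> real) \<Rightarrow> 'n dform" where
  "square_dform \<alpha> = dform_of_bilinear (\<lambda>x y. \<alpha> x * \<alpha> y)"

lemma dprod_list_square_dforms:
  "dprod_list (map square_dform \<alpha>s) = (\<lambda>xs ys. wedge \<alpha>s xs * wedge \<alpha>s ys)"
proof (induction \<alpha>s)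
  case Nil
  then show ?case by (simp add: wedge_Nil)
next
  case (Cons \<alpha> \<alpha>s)
  define k where "k = length \<alpha>s"
  define A where "A xs = (\<Sum>\<sigma> | \<sigma> permutes {..<Suc k}. of_int (sign \<sigma>) * \<alpha> (xs ! \<sigma> 0)
            * wedge \<alpha>s (map (\<lambda>i. xs ! \<sigma> i) [1..<Suc k]))" for xs
  have A: "A xs = fact k * wedge (\<alpha>#\<alpha>s) xs" for xs
    unfolding A_def by (rule wedge_Cons_expansion) (simp add: k_def)
  show ?case
  proof (intro ext)
    fix xs ys
    have "dprod_list (map square_dform (\<alpha>#\<alpha>s)) xs ys = (A xs * A ys) / (fact k * fact k)"
      unfolding A_def sum_product
      by (simp add: Cons.IH dprod_def k_def square_dform_def dform_of_bilinear_def sum_divide_distrib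
           del: upt_Suc, intro sum.cong refl, simp add: algebra_simps)
    also have "\<dots> = wedge (\<alpha>#\<alpha>s) xs * wedge (\<alpha>#\<alpha>s) ys" by (simp add: A)
    finally show "dprod_list (map square_dform (\<alpha>#\<alpha>s)) xs ys = wedge (\<alpha>#\<alpha>s) xs * wedge (\<alpha>#\<alpha>s) ys" .
  qed
qed

lemma wedge_eq_0_if_repeated:
  assumes ab: "a < length \<alpha>s" "b < length \<alpha>s" "a \<noteq> b" "\<alpha>s!a = \<alpha>s!b"
  shows "wedge \<alpha>s xs = 0"
proof -
  define n where "n = length \<alpha>s"
  define t where "t = Transposition.transpose a b"
  define f where "f \<sigma> = of_int (sign \<sigma>) * (\<Prod>k<n. (\<alpha>s ! k) (xs ! \<sigma> k))" for \<sigma> :: "nat \<Rightarrow> nat"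
  have tp: "t permutes {..<n}" unfolding t_def n_def using ab by (intro permutes_swap_id) auto
  have W: "wedge \<alpha>s xs = sum f {\<sigma>. \<sigma> permutes {..<n}}" unfolding wedge_def f_def n_def by simp
  have tt: "t (t k) = k" for k unfolding t_def by simp
  have at: "\<alpha>s ! (t k) = \<alpha>s ! k" for k unfolding t_def using ab(4)
    by (simp add: Transposition.transpose_def)
  have neg: "f (\<sigma> \<circ> t) = - f \<sigma>" if "\<sigma> permutes {..<n}" for \<sigma>
  proof -
    have sg: "sign (\<sigma> \<circ> t) = - sign \<sigma>"
      using sign_compose[of \<sigma> t] that tp permutes_imp_permutation[OF finite_lessThan] ab(3)
      by (simp add: t_def sign_swap_id)
    have "(\<Prod>k<n. (\<alpha>s ! k) (xs ! \<sigma> (t k))) = (\<Prod>k<n. (\<alpha>s ! t k) (xs ! \<sigma> k))"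
      using prod.reindex_bij_betw[OF permutes_imp_bij[OF tp], of "\<lambda>k. (\<alpha>s ! t k) (xs ! \<sigma> k)"]
      by (simp add: tt)
    also have "\<dots> = (\<Prod>k<n. (\<alpha>s ! k) (xs ! \<sigma> k))" by (simp add: at)
    finally show ?thesis unfolding f_def sg by simp
  qed
  have "sum f {\<sigma>. \<sigma> permutes {..<n}} = sum (\<lambda>\<sigma>. f (\<sigma> \<circ> t)) {\<sigma>. \<sigma> permutes {..<n}}"
    by (rule sum_permutations_compose_right[OF tp])
  also have "\<dots> = - sum f {\<sigma>. \<sigma> permutes {..<n}}"
    by (simp add: neg sum_negf)
  finally show ?thesis unfolding W by simp
qed

lemma orthonormal_basis_inj: "orthonormal_basis e \<Longrightarrow> inj e"
  unfolding orthonormal_basis_def inj_def by (metis zero_neq_one)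

lemma orthonormal_basis_expansion:
  fixes e :: "'n::finite \<Rightarrow> real^'n"
  assumes e: "orthonormal_basis e"
  shows "x = (\<Sum>i\<in>UNIV. (e i \<bullet> x) *\<^sub>R e i)"
proof -
  let ?B = "range e"
  have ij: "inj e" using orthonormal_basis_inj[OF e] .
  have po: "pairwise orthogonal ?B"
    using e unfolding orthonormal_basis_def pairwise_def orthogonal_def by auto
  have n1: "\<And>b. b \<in> ?B \<Longrightarrow> norm b = 1"
    using e unfolding orthonormal_basis_def by (auto simp: norm_eq_sqrt_inner)
  have z: "0 \<notin> ?B" using n1 by fastforce
  have ind: "independent ?B" by (rule pairwise_orthogonal_independent[OF po z])
  have cB: "card ?B = CARD('n)" using card_image[OF ij] by simp
  have "card ?B = dim (UNIV :: (real^'n) set)" using cB by simp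
  then have sp: "UNIV \<subseteq> span ?B" using card_eq_dim[of ?B UNIV] ind by simp
  have "(\<Sum>b\<in>?B. (x \<bullet> b) *\<^sub>R b) = x"
    by (rule orthonormal_basis_expand[OF po n1]) (use sp in auto)
  then show ?thesis using sum.reindex[OF ij, of "\<lambda>b. (x \<bullet> b) *\<^sub>R b"]
    by (simp add: inner_commute)
qed

lemma diagonal_bilinear_expansion:
  assumes e: "orthonormal_basis e" and h: "sym_bilinear h"
    and d: "\<forall>i j. i \<noteq> j \<longrightarrow> h (e i) (e j) = 0"
  shows "h x y = (\<Sum>i\<in>UNIV. h (e i) (e i) * ((e i \<bullet> x) * (e i \<bullet> y)))"
proof -
  have bl: "bilinear h" using h unfolding sym_bilinear_def by simp
  have "h x y = h (\<Sum>i\<in>UNIV. (e i \<bullet> x) *\<^sub>R e i) (\<Sum>j\<in>UNIV. (e j \<bullet> y) *\<^sub>R e j)"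
    by (subst (1) orthonormal_basis_expansion[OF e, of x], subst (1) orthonormal_basis_expansion[OF e, of y]) (rule refl)
  also have "\<dots> = (\<Sum>(i,j)\<in>UNIV\<times>UNIV. h ((e i \<bullet> x) *\<^sub>R e i) ((e j \<bullet> y) *\<^sub>R e j))"
    by (rule bilinear_sum[OF bl])
  also have "\<dots> = (\<Sum>i\<in>UNIV. \<Sum>j\<in>UNIV. h ((e i \<bullet> x) *\<^sub>R e i) ((e j \<bullet> y) *\<^sub>R e j))"
    by (simp add: sum.cartesian_product)
  also have "\<dots> = (\<Sum>i\<in>UNIV. \<Sum>j\<in>UNIV. if i = j then h (e i) (e i) * ((e i \<bullet> x) * (e i \<bullet> y)) else 0)"
    by (intro sum.cong refl) (auto simp: bilinear_lmul[OF bl] bilinear_rmul[OF bl] d)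
  also have "\<dots> = (\<Sum>i\<in>UNIV. h (e i) (e i) * ((e i \<bullet> x) * (e i \<bullet> y)))"
    by simp
  finally show ?thesis .
qed

lemma in_dspan_member: "g \<in> G \<Longrightarrow> in_dspan k l g G"
  unfolding in_dspan_def by (rule exI[of _ "{g}"], rule exI[of _ "\<lambda>_. 1"]) simp

lemma in_dspan_linear_combination:
  fixes G :: "'n::finite dform set"
  assumes I: "finite I" and f: "\<forall>i\<in>I. in_dspan k l (f i) G"
    and T: "\<forall>xs ys. length xs = k \<longrightarrow> length ys = l \<longrightarrow> T xs ys = (\<Sum>i\<in>I. c i * f i xs ys)"
  shows "in_dspan k l T G"
proof -
  from f have "\<forall>i\<in>I. \<exists>F c. finite F \<and> F \<subseteq> G \<and>
     (\<forall>xs ys. length xs = k \<longrightarrow> length ys = l \<longrightarrow> f i xs ys = (\<Sum>g\<in>F. c g * g xs ys))"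
    unfolding in_dspan_def by blast
  then obtain Fi where "\<forall>i\<in>I. \<exists>c. finite (Fi i) \<and> Fi i \<subseteq> G \<and>
     (\<forall>xs ys. length xs = k \<longrightarrow> length ys = l \<longrightarrow> f i xs ys = (\<Sum>g\<in>Fi i. c g * g xs ys))"
    by (rule bchoice[THEN exE]) blast
  then obtain ci where Fi: "\<forall>i\<in>I. finite (Fi i) \<and> Fi i \<subseteq> G \<and>
     (\<forall>xs ys. length xs = k \<longrightarrow> length ys = l \<longrightarrow> f i xs ys = (\<Sum>g\<in>Fi i. ci i g * g xs ys))"
    by (rule bchoice[THEN exE]) blast
  define F where "F = (\<Union>i\<in>I. Fi i)"
  define c' where "c' g = (\<Sum>i\<in>I. c i * (if g \<in> Fi i then ci i g else 0))" for g
  have fF: "finite F" unfolding F_def using I Fi by auto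
  have sF: "F \<subseteq> G" unfolding F_def using Fi by auto
  show ?thesis unfolding in_dspan_def
  proof (intro exI conjI allI impI)
    fix xs ys :: "(real^'n) list" assume l: "length xs = k" "length ys = l"
    have "(\<Sum>g\<in>F. c' g * g xs ys) = (\<Sum>g\<in>F. \<Sum>i\<in>I. c i * (if g \<in> Fi i then ci i g * g xs ys else 0))"
      unfolding c'_def sum_distrib_right by (intro sum.cong refl) auto
    also have "\<dots> = (\<Sum>i\<in>I. c i * (\<Sum>g\<in>F. (if g \<in> Fi i then ci i g * g xs ys else 0)))"
      by (subst sum.swap) (simp add: sum_distrib_left)
    also have "\<dots> = (\<Sum>i\<in>I. c i * (\<Sum>g\<in>Fi i. ci i g * g xs ys))"
    proof (intro sum.cong refl)
      fix i assume i: "i \<in> I"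
      have "Fi i \<subseteq> F" unfolding F_def using i by auto
      then have "F \<inter> Fi i = Fi i" by auto
      then show "c i * (\<Sum>g\<in>F. (if g \<in> Fi i then ci i g * g xs ys else 0)) = c i * (\<Sum>g\<in>Fi i. ci i g * g xs ys)"
        using sum.inter_restrict[OF fF, of "\<lambda>g. ci i g * g xs ys" "Fi i"] by simp
    qed
    also have "\<dots> = T xs ys" using T Fi l by simp
    finally show "T xs ys = (\<Sum>g\<in>F. c' g * g xs ys)" by simp
  qed (use fF sF in auto)
qed

lemma in_dspan_trans:
  fixes G' :: "'n::finite dform set"
  assumes "in_dspan k l T G" "\<forall>g\<in>G. in_dspan k l g G'"
  shows "in_dspan k l T G'"
proof -
  obtain F c where F: "finite F" "F \<subseteq> G"
    "\<forall>xs ys. length xs = k \<longrightarrow> length ys = l \<longrightarrow> T xs ys = (\<Sum>g\<in>F. c g * g xs ys)"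
    using assms(1) unfolding in_dspan_def by blast
  show ?thesis by (rule in_dspan_linear_combination[OF F(1) _ F(3)]) (use F(2) assms(2) in blast)
qed

lemma dprod_linear_right:
  assumes F: "\<forall>xs ys. length xs = r \<longrightarrow> length ys = s \<longrightarrow> \<theta> xs ys = (\<Sum>g\<in>F. c g * g xs ys)"
  shows "dprod p q r s \<omega> \<theta> xs ys = (\<Sum>g\<in>F. c g * dprod p q r s \<omega> g xs ys)"
proof -
  have th: "\<theta> (map (\<lambda>i. xs ! \<sigma> i) [p..<p+r]) (map (\<lambda>j. ys ! \<tau> j) [q..<q+s])
     = (\<Sum>g\<in>F. c g * g (map (\<lambda>i. xs ! \<sigma> i) [p..<p+r]) (map (\<lambda>j. ys ! \<tau> j) [q..<q+s]))" for \<sigma> \<tau>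
    using F by simp
  have "dprod p q r s \<omega> \<theta> xs ys = (\<Sum>\<sigma> | \<sigma> permutes {..<p+r}. \<Sum>\<tau> | \<tau> permutes {..<q+s}. \<Sum>g\<in>F.
        c g * (of_int (sign \<sigma> * sign \<tau>)
        * \<omega> (map (\<lambda>i. xs ! \<sigma> i) [0..<p]) (map (\<lambda>j. ys ! \<tau> j) [0..<q])
        * g (map (\<lambda>i. xs ! \<sigma> i) [p..<p+r]) (map (\<lambda>j. ys ! \<tau> j) [q..<q+s])))
     / (fact p * fact r * fact q * fact s)"
    unfolding dprod_def th sum_distrib_left by (intro arg_cong2[where f="(/)"] sum.cong refl) (simp add: ac_simps)
  also have "\<dots> = (\<Sum>g\<in>F. c g * dprod p q r s \<omega> g xs ys)"
    unfolding dprod_def sum_divide_distrib sum_distrib_left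
    by (subst sum.swap, rule sum.cong[OF refl], subst sum.swap, rule sum.cong[OF refl], simp)
  finally show ?thesis .
qed

lemma dprod_linear_left:
  assumes "\<omega> = (\<lambda>xs ys. \<Sum>i\<in>I. d i * w i xs ys)"
  shows "dprod p q r s \<omega> \<theta> xs ys = (\<Sum>i\<in>I. d i * dprod p q r s (w i) \<theta> xs ys)"
  unfolding dprod_def assms
  by (simp add: sum_distrib_left sum_distrib_right sum_divide_distrib mult.assoc mult.left_commute
        sum.swap[of _ I])

definition basis_square :: "('n \<Rightarrow> real^'n) \<Rightarrow> 'n \<Rightarrow> 'n dform" where
  "basis_square e i = square_dform (\<lambda>v. e i \<bullet> v)"

lemma pure_elem_eq_dprod_list: "pure_elem e is = dprod_list (map (basis_square e) is)"
proof -
  have "map (basis_square e) is = map square_dform (map (\<lambda>i v. e i \<bullet> v) is)" by (simp add: basis_square_def)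
  then show ?thesis unfolding pure_elem_def by (simp only: dprod_list_square_dforms)
qed

lemma pure_elem_eq_0_if_not_distinct:
  assumes "\<not> distinct is"
  shows "pure_elem e is xs ys = 0"
proof -
  obtain a b where ab: "a < length is" "b < length is" "a \<noteq> b" "is ! a = is ! b"
    using assms by (auto simp: distinct_conv_nth)
  have "wedge (map (\<lambda>i v. e i \<bullet> v) is) xs = 0"
    by (rule wedge_eq_0_if_repeated[of a _ b]) (use ab in auto)
  then show ?thesis unfolding pure_elem_def by simp
qed

lemma dprod_list_basis_squares_in_pure_span:
  fixes e :: "'n::finite \<Rightarrow> real^'n"
  assumes "length is = k"
  shows "in_dspan k k (dprod_list (map (basis_square e) is)) {pure_elem e is | is. distinct is \<and> length is = k}"
proof (cases "distinct is")
  case True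
  then show ?thesis using assms by (intro in_dspan_member) (auto simp: pure_elem_eq_dprod_list)
next
  case False
  show ?thesis
    by (rule in_dspan_linear_combination[of "{}"]) (auto simp: pure_elem_eq_dprod_list[symmetric] pure_elem_eq_0_if_not_distinct[OF False])
qed

lemma dform_of_diagonal_bilinear:
  assumes e: "orthonormal_basis e" and h: "sym_bilinear h"
    and d: "\<forall>i j. i \<noteq> j \<longrightarrow> h (e i) (e j) = 0"
  shows "dform_of_bilinear h = (\<lambda>xs ys. \<Sum>i\<in>UNIV. h (e i) (e i) * basis_square e i xs ys)"
  unfolding fun_eq_iff dform_of_bilinear_def basis_square_def square_dform_def
  by (intro allI, subst diagonal_bilinear_expansion[OF e h d]) (rule refl)

lemma dprod_diagonal_basis_squares_in_span:
  fixes e :: "'n::finite \<Rightarrow> real^'n"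
  assumes e: "orthonormal_basis e" and h: "sym_bilinear h"
    and d: "\<forall>i j. i \<noteq> j \<longrightarrow> h (e i) (e j) = 0" and js: "length js = n"
  shows "in_dspan (Suc n) (Suc n)
           (dprod 1 1 n n (dform_of_bilinear h) (dprod_list (map (basis_square e) js)))
           {dprod_list (map (basis_square e) is) | is. length is = Suc n}"
proof (rule in_dspan_linear_combination[of UNIV])
  show "\<forall>i\<in>UNIV. in_dspan (Suc n) (Suc n)
          (dprod 1 1 n n (basis_square e i) (dprod_list (map (basis_square e) js)))
          {dprod_list (map (basis_square e) is) | is. length is = Suc n}"
  proof
    fix i
    have "dprod 1 1 n n (basis_square e i) (dprod_list (map (basis_square e) js))
        = dprod_list (map (basis_square e) (i#js))" using js by simp
    then show "in_dspan (Suc n) (Suc n)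
          (dprod 1 1 n n (basis_square e i) (dprod_list (map (basis_square e) js)))
          {dprod_list (map (basis_square e) is) | is. length is = Suc n}"
      using js by (intro in_dspan_member) (auto intro!: exI[of _ "i#js"])
  qed
  show "\<forall>xs ys. length xs = Suc n \<longrightarrow> length ys = Suc n \<longrightarrow>
      dprod 1 1 n n (dform_of_bilinear h) (dprod_list (map (basis_square e) js)) xs ys
      = (\<Sum>i\<in>UNIV. h (e i) (e i) * dprod 1 1 n n (basis_square e i) (dprod_list (map (basis_square e) js)) xs ys)"
    by (intro allI impI dprod_linear_left[OF dform_of_diagonal_bilinear[OF e h d]])
qed simp

lemma dprod_list_diagonal_in_basis_squares_span:
  fixes e :: "'n::finite \<Rightarrow> real^'n"
  assumes e: "orthonormal_basis e"
    and H: "\<forall>h\<in>set hs. sym_bilinear h \<and> (\<forall>i j. i \<noteq> j \<longrightarrow> h (e i) (e j) = 0)"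
  shows "in_dspan (length hs) (length hs) (dprod_list (map dform_of_bilinear hs))
           {dprod_list (map (basis_square e) is) | is. length is = length hs}"
  using H
proof (induction hs)
  case Nil
  show ?case by (rule in_dspan_member) (auto intro: exI[of _ "[]"])
next
  case (Cons h hs)
  define n where "n = length hs"
  from Cons have "in_dspan n n (dprod_list (map dform_of_bilinear hs))
           {dprod_list (map (basis_square e) is) | is. length is = n}" unfolding n_def by simp
  then obtain F c where F: "finite F" "F \<subseteq> {dprod_list (map (basis_square e) is) | is. length is = n}"
    "\<forall>xs ys. length xs = n \<longrightarrow> length ys = n \<longrightarrow>
       dprod_list (map dform_of_bilinear hs) xs ys = (\<Sum>g\<in>F. c g * g xs ys)"
    unfolding in_dspan_def by blast
  have h: "sym_bilinear h" "\<forall>i j. i \<noteq> j \<longrightarrow> h (e i) (e j) = 0" using Cons.prems by auto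
  show ?case
  proof (rule in_dspan_linear_combination[OF F(1)])
    show "\<forall>g\<in>F. in_dspan (length (h#hs)) (length (h#hs)) (dprod 1 1 n n (dform_of_bilinear h) g)
           {dprod_list (map (basis_square e) is) | is. length is = length (h#hs)}"
    proof
      fix g assume "g \<in> F"
      then obtain js where g: "g = dprod_list (map (basis_square e) js)" and js: "length js = n"
        using F(2) by blast
      show "in_dspan (length (h#hs)) (length (h#hs)) (dprod 1 1 n n (dform_of_bilinear h) g)
           {dprod_list (map (basis_square e) is) | is. length is = length (h#hs)}"
        unfolding g using dprod_diagonal_basis_squares_in_span[OF e h js] by (simp add: n_def)
    qed
    show "\<forall>xs ys. length xs = length (h#hs) \<longrightarrow> length ys = length (h#hs) \<longrightarrow>
       dprod_list (map dform_of_bilinear (h#hs)) xs ys = (\<Sum>g\<in>F. c g * dprod 1 1 n n (dform_of_bilinear h) g xs ys)"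
      using dprod_linear_right[OF F(3), of 1 1 "dform_of_bilinear h"] by (simp add: n_def)
  qed
qed

lemma sym_bilinear_inner_square: "sym_bilinear (\<lambda>x y. (a \<bullet> x) * (a \<bullet> (y::real^'n)))"
  unfolding sym_bilinear_def bilinear_def
  by (auto simp: linear_iff inner_add_right algebra_simps)

lemma ex_pure_span_iff_ex_diagonal_products_span:
  fixes T :: "'n::finite dform"
  shows "(\<exists>e. orthonormal_basis e \<and> in_dspan k k T {pure_elem e is | is. distinct is \<and> length is = k})
    \<longleftrightarrow> (\<exists>H. (\<forall>h\<in>H. sym_bilinear h)
       \<and> (\<exists>e. orthonormal_basis e \<and> (\<forall>h\<in>H. \<forall>i j. i \<noteq> j \<longrightarrow> h (e i) (e j) = 0))
       \<and> in_dspan k k T {dprod_list (map dform_of_bilinear hs) | hs. hs \<in> lists H \<and> length hs = k})"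
proof
  assume "\<exists>e. orthonormal_basis e \<and> in_dspan k k T {pure_elem e is | is. distinct is \<and> length is = k}"
  then obtain e where e: "orthonormal_basis e"
    and pure: "in_dspan k k T {pure_elem e is | is. distinct is \<and> length is = k}"
    by blast
  define sq where "sq i = (\<lambda>x y. (e i \<bullet> x) * (e i \<bullet> (y::real^'n)))" for i
  have "in_dspan k k T {dprod_list (map dform_of_bilinear hs) | hs. hs \<in> lists (range sq) \<and> length hs = k}"
  proof (rule in_dspan_trans[OF pure], intro ballI)
    fix g assume "g \<in> {pure_elem e is | is. distinct is \<and> length is = k}"
    then obtain js where js: "g = pure_elem e js" "length js = k" by blast
    have "g = dprod_list (map dform_of_bilinear (map sq js))"
      unfolding js pure_elem_eq_dprod_list
      by (simp add: basis_square_def[abs_def] square_dform_def sq_def comp_def)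
    then show "in_dspan k k g {dprod_list (map dform_of_bilinear hs) | hs. hs \<in> lists (range sq) \<and> length hs = k}"
      using js by (intro in_dspan_member CollectI exI[of _ "map sq js"]) auto
  qed
  moreover have "\<forall>h\<in>range sq. sym_bilinear h"
    unfolding sq_def using sym_bilinear_inner_square by blast
  moreover have "\<forall>h\<in>range sq. \<forall>i j. i \<noteq> j \<longrightarrow> h (e i) (e j) = 0"
    using e by (auto simp: sq_def orthonormal_basis_def)
  ultimately show "\<exists>H. (\<forall>h\<in>H. sym_bilinear h)
       \<and> (\<exists>e. orthonormal_basis e \<and> (\<forall>h\<in>H. \<forall>i j. i \<noteq> j \<longrightarrow> h (e i) (e j) = 0))
       \<and> in_dspan k k T {dprod_list (map dform_of_bilinear hs) | hs. hs \<in> lists H \<and> length hs = k}"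
    by (intro exI[of _ "range sq"]) (use e in blast)
next
  assume "\<exists>H. (\<forall>h\<in>H. sym_bilinear h)
       \<and> (\<exists>e. orthonormal_basis e \<and> (\<forall>h\<in>H. \<forall>i j. i \<noteq> j \<longrightarrow> h (e i) (e j) = 0))
       \<and> in_dspan k k T {dprod_list (map dform_of_bilinear hs) | hs. hs \<in> lists H \<and> length hs = k}"
  then obtain H e where sym: "\<forall>h\<in>H. sym_bilinear h" and e: "orthonormal_basis e"
    and diag: "\<forall>h\<in>H. \<forall>i j. i \<noteq> j \<longrightarrow> h (e i) (e j) = 0"
    and span: "in_dspan k k T {dprod_list (map dform_of_bilinear hs) | hs. hs \<in> lists H \<and> length hs = k}"
    by (elim exE conjE)
  have "in_dspan k k T {pure_elem e is | is. distinct is \<and> length is = k}"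
  proof (rule in_dspan_trans[OF span], intro ballI)
    fix g assume "g \<in> {dprod_list (map dform_of_bilinear hs) | hs. hs \<in> lists H \<and> length hs = k}"
    then obtain hs where hs: "g = dprod_list (map dform_of_bilinear hs)" "hs \<in> lists H" "length hs = k"
      by blast
    have "in_dspan k k g {dprod_list (map (basis_square e) is) | is. length is = k}"
      using dprod_list_diagonal_in_basis_squares_span[OF e, of hs] hs sym diag by auto
    then show "in_dspan k k g {pure_elem e is | is. distinct is \<and> length is = k}"
      by (rule in_dspan_trans) (auto intro: dprod_list_basis_squares_in_pure_span)
  qed
  with e show "\<exists>e. orthonormal_basis e \<and> in_dspan k k T {pure_elem e is | is. distinct is \<and> length is = k}"
    by blast
qed

theorem mainTheorem2:
  fixes M :: "'m set"
    and R :: "'m \<Rightarrow> real^'n \<Rightarrow> real^'n \<Rightarrow> real^'n \<Rightarrow> real^'n \<Rightarrow> real"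
    and p :: nat
  assumes "\<forall>m\<in>M. alg_curv (R m)"
    and "1 \<le> p" and "2 * p \<le> CARD('n)"
  shows "is_p_pure M R p \<longleftrightarrow>
    (\<forall>m\<in>M. \<exists>H. (\<forall>h\<in>H. sym_bilinear h)
       \<and> (\<exists>e. orthonormal_basis e \<and> (\<forall>h\<in>H. \<forall>i j. i \<noteq> j \<longrightarrow> h (e i) (e j) = 0))
       \<and> in_dspan (2*p) (2*p) (dpow p (curv_dform (R m)))
           {dprod_list (map dform_of_bilinear hs) | hs. hs \<in> lists H \<and> length hs = 2*p})"
  unfolding is_p_pure_def ex_pure_span_iff_ex_diagonal_products_span by (rule refl)

end
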